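(* Let $\mathcal{A}$ be a strong $T_0$-family. For every $\delta>0$ there is $\varepsilon>0$ such that for every uncountable $(1-\varepsilon)$-separated set $\{x_\alpha:\alpha<\omega_1\}$ contained in the unit sphere of $\mathcal{X}_\mathcal{A}$ there are $\alpha<\beta<\omega_1$ with $\|x_\alpha-x_\beta\|_\mathcal{A}>\sqrt2-\delta$ and there are $\xi<\eta<\omega_1$ with $\|x_\xi-x_\eta\|_\mathcal{A}<1+\delta$.
   Context: A set $\mathcal{Y}$ is $\gamma$-separated if $\|y-y'\|\ge\gamma$ for distinct $y,y'\in\mathcal{Y}$. $c_{00}(\omega_1)$ is the set of finitely supported $x\in\mathbb{R}^{\omega_1}$; $\|x\|_\mathcal{A}=\sup_{A\in\mathcal{A}}\sqrt{\sum_{\alpha\in A}x(\alpha)^2}$ and $\mathcal{X}_\mathcal{A}$ is the closure of $c_{00}(\omega_1)$ in $\{x\in\mathbb{R}^{\omega_1}:\|x\|_\mathcal{A}<\infty\}$. For disjoint $A,B$, $A\otimes B=\{\{\alpha,\beta\}:\alpha\in A,\beta\in B\}$. A function $c=(c_0,c_1):[\omega_1]^2\to I\times J$ ($0,1\in I$, $J\ne\emptyset$) is a $T$-coloring if for every uncountable pairwise disjoint family $\{\{a_\xi(0),a_\xi(1)\}:\xi<\omega_1\}$ of pairs and all $(i_0,j_0),(i_1,j_1)\in I\times J$ there are $\xi<\eta$ with $c(\{a_\xi(0),a_\eta(0)\})=(i_0,j_0)$, $c(\{a_\xi(1),a_\eta(1)\})=(i_1,j_1)$; it is a strong $T$-coloring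 if moreover for every uncountable pairwise disjoint family $\{A_\xi:\xi<\omega_1\}$ of finite subsets of $\omega_1$ there are $\xi<\eta$ with $c_0[A_\xi\otimes A_\eta]=\{0\}$ and $\xi<\eta$ with $c_0[A_\xi\otimes A_\eta]=\{1\}$. A strong $T_0$-family is $\mathcal{A}_c=\{a\subseteq\omega_1\text{ finite}:c_0[[a]^2]\subseteq\{0\}\}$ for a strong $T$-coloring $c$. *)

theory Defs
  imports Complex_Main "HOL-Library.Countable_Set"
begin

text \<open>omega_1 is modelled by a well-ordered type 'w that is uncountable but all of whose
  proper initial segments are countable (this characterises omega_1 up to order isomorphism).\<close>
definition is_omega1 :: "'w::wellorder itself \<Rightarrow> bool" where
  "is_omega1 _ \<longleftrightarrow> \<not> countable (UNIV :: 'w set) \<and> (\<forall>a::'w. countable {b. b < a})"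

definition pairs_of :: "'a set \<Rightarrow> 'a set set" where
  "pairs_of S = {p. p \<subseteq> S \<and> card p = 2}"

definition otimes :: "'a set \<Rightarrow> 'a set \<Rightarrow> 'a set set" where
  "otimes A B = {{a, b} | a b. a \<in> A \<and> b \<in> B}"

definition T_coloring ::
  "('w::wellorder set \<Rightarrow> 'i::zero_neq_one \<times> 'j) \<Rightarrow> 'i set \<Rightarrow> 'j set \<Rightarrow> bool" where
  "T_coloring c I J \<longleftrightarrow>
     0 \<in> I \<and> 1 \<in> I \<and> J \<noteq> {} \<and>
     (\<forall>p \<in> pairs_of (UNIV :: 'w set). c p \<in> I \<times> J) \<and>
     (\<forall>a0 a1 :: 'w \<Rightarrow> 'w.
        (\<forall>\<xi>. a0 \<xi> \<noteq> a1 \<xi>) \<and>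
        (\<forall>\<xi> \<eta>. \<xi> \<noteq> \<eta> \<longrightarrow> {a0 \<xi>, a1 \<xi>} \<inter> {a0 \<eta>, a1 \<eta>} = {}) \<longrightarrow>
        (\<forall>t0 \<in> I \<times> J. \<forall>t1 \<in> I \<times> J.
           \<exists>\<xi> \<eta>. \<xi> < \<eta> \<and> c {a0 \<xi>, a0 \<eta>} = t0 \<and> c {a1 \<xi>, a1 \<eta>} = t1))"

definition strong_T_coloring ::
  "('w::wellorder set \<Rightarrow> 'i::zero_neq_one \<times> 'j) \<Rightarrow> 'i set \<Rightarrow> 'j set \<Rightarrow> bool" where
  "strong_T_coloring c I J \<longleftrightarrow>
     T_coloring c I J \<and>
     (\<forall>A :: 'w \<Rightarrow> 'w set.
        (\<forall>\<xi>. finite (A \<xi>) \<and> A \<xi> \<noteq> {}) \<and>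
        (\<forall>\<xi> \<eta>. \<xi> \<noteq> \<eta> \<longrightarrow> A \<xi> \<inter> A \<eta> = {}) \<longrightarrow>
        (\<exists>\<xi> \<eta>. \<xi> < \<eta> \<and> (fst \<circ> c) ` otimes (A \<xi>) (A \<eta>) = {0}) \<and>
        (\<exists>\<xi> \<eta>. \<xi> < \<eta> \<and> (fst \<circ> c) ` otimes (A \<xi>) (A \<eta>) = {1}))"

definition T0_family :: "('w set \<Rightarrow> 'i::zero \<times> 'j) \<Rightarrow> 'w set set" where
  "T0_family c = {a. finite a \<and> (fst \<circ> c) ` pairs_of a \<subseteq> {0}}"

definition normA :: "'w set set \<Rightarrow> ('w \<Rightarrow> real) \<Rightarrow> real" where
  "normA \<A> x = (SUP a \<in> \<A>. sqrt (\<Sum>\<alpha>\<in>a. (x \<alpha>)\<^sup>2))"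

definition finite_normA :: "'w set set \<Rightarrow> ('w \<Rightarrow> real) \<Rightarrow> bool" where
  "finite_normA \<A> x \<longleftrightarrow> bdd_above ((\<lambda>a. sqrt (\<Sum>\<alpha>\<in>a. (x \<alpha>)\<^sup>2)) ` \<A>)"

definition c00 :: "('w \<Rightarrow> real) set" where
  "c00 = {x. finite {\<alpha>. x \<alpha> \<noteq> 0}}"

definition XA :: "'w set set \<Rightarrow> ('w \<Rightarrow> real) set" where
  "XA \<A> = {x. finite_normA \<A> x \<and>
              (\<forall>e>0. \<exists>y \<in> c00. normA \<A> (\<lambda>\<alpha>. x \<alpha> - y \<alpha>) < e)}"

end

theory Submission
  imports Defs "HOL-Analysis.L2_Norm"
begin

(* Approximate the unit vectors x_alpha by finitely supported y_alpha. By the Delta-system lemma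
   and pigeonholing there is an uncountable set of indices on which the supports of the y_alpha
   form a Delta-system with root r, the y_alpha almost agree on r, and their tails (the parts
   outside r) have almost the same norm tau. A finite 0-homogeneous set meets at most one of two
   tails all of whose cross pairs have colour 1, so for such a pair the distance is at most about
   max tau; by separation this forces tau to be about 1 and gives the distance < 1 + delta. For two
   tails all of whose cross pairs have colour 0, homogeneous subsets of the two tails may be
   joined, so the squared distance is at least about tau^2 + tau^2 = 2. The strong T-colouring
   supplies pairs of both kinds. *)

section \<open>Uncountable subsets of omega_1\<close>

lemma countable_atMost_omega1:
  assumes "is_omega1 TYPE('w::wellorder)"
  shows "countable {..a::'w}"
proof -
  have "{..a} = insert a {b. b < a}" by auto
  then show ?thesis using assms by (simp add: is_omega1_def)
qed

lemma omega1_transfinite_choice: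
  fixes P :: "'a set \<Rightarrow> 'a \<Rightarrow> bool"
  assumes om: "is_omega1 TYPE('w::wellorder)"
    and ex: "\<And>C. countable C \<Longrightarrow> \<exists>w. P C w"
  shows "\<exists>f :: 'w \<Rightarrow> 'a. \<forall>\<xi>. P (f ` {\<zeta>. \<zeta> < \<xi>}) (f \<xi>)"
proof -
  define R where "R = {(\<zeta>::'w, \<xi>). \<zeta> < \<xi>}"
  define f where "f = wfrec R (\<lambda>g \<xi>. SOME w. P (g ` {\<zeta>. \<zeta> < \<xi>}) w)"
  have "P (f ` {\<zeta>. \<zeta> < \<xi>}) (f \<xi>)" for \<xi>
  proof -
    have "f \<xi> = (SOME w. P (cut f R \<xi> ` {\<zeta>. \<zeta> < \<xi>}) w)"
      unfolding f_def by (rule wfrec) (simp add: R_def wf)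
    also have "cut f R \<xi> ` {\<zeta>. \<zeta> < \<xi>} = f ` {\<zeta>. \<zeta> < \<xi>}"
      by (simp add: cut_apply R_def)
    finally have f_eq: "f \<xi> = (SOME w. P (f ` {\<zeta>. \<zeta> < \<xi>}) w)" .
    have "countable (f ` {\<zeta>. \<zeta> < \<xi>})"
      using om by (simp add: is_omega1_def)
    then have "\<exists>w. P (f ` {\<zeta>. \<zeta> < \<xi>}) w" by (rule ex)
    then show ?thesis unfolding f_eq by (rule someI_ex)
  qed
  then show ?thesis by blast
qed

lemma omega1_greedy_enumeration:
  assumes om: "is_omega1 TYPE('w::wellorder)" and W: "uncountable (W::'w set)"
    and R: "\<forall>\<xi>\<in>W. countable {\<eta> \<in> W. \<not> R \<xi> \<eta>}"
  obtains f :: "'w::wellorder \<Rightarrow> 'w"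
  where "strict_mono f" "range f \<subseteq> W" "\<And>\<xi> \<eta>. \<xi> < \<eta> \<Longrightarrow> R (f \<xi>) (f \<eta>)"
proof -
  let ?P = "\<lambda>C w. w \<in> W \<and> (\<forall>c \<in> C \<inter> W. c < w \<and> R c w)"
  have ex: "\<exists>w. ?P C w" if C: "countable C" for C
  proof -
    let ?bad = "(\<Union>c\<in>C. {..c}) \<union> (\<Union>c\<in>C \<inter> W. {\<eta> \<in> W. \<not> R c \<eta>})"
    have "countable ?bad"
      using C R countable_atMost_omega1[OF om] by auto
    then have "uncountable (W - ?bad)"
      by (rule uncountable_minus_countable[OF W])
    then have "W - ?bad \<noteq> {}" by (metis countable_empty)
    then show ?thesis by (auto simp: not_le)
  qed
  have "\<exists>f :: 'w \<Rightarrow> 'w. \<forall>\<xi>. ?P (f ` {\<zeta>. \<zeta> < \<xi>}) (f \<xi>)"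
    by (rule omega1_transfinite_choice[OF om ex])
  then obtain f :: "'w \<Rightarrow> 'w" where f: "\<forall>\<xi>. ?P (f ` {\<zeta>. \<zeta> < \<xi>}) (f \<xi>)" ..
  have f_lt: "f \<zeta> < f \<xi> \<and> R (f \<zeta>) (f \<xi>)" if "\<zeta> < \<xi>" for \<zeta> \<xi>
  proof -
    have "f \<zeta> \<in> f ` {\<zeta>. \<zeta> < \<xi>} \<inter> W" using f that by blast
    then show ?thesis using f by blast
  qed
  show ?thesis
  proof (rule that)
    show "strict_mono f" using f_lt by (simp add: strict_mono_def)
    show "range f \<subseteq> W" using f by blast
  qed (use f_lt in blast)
qed

lemma uncountable_fiber:
  assumes "uncountable W" and "countable (g ` W)"
  obtains v where "uncountable {\<xi> \<in> W. g \<xi> = v}"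
proof (rule ccontr)
  assume "\<not> thesis"
  then have "countable {\<xi> \<in> W. g \<xi> = v}" for v
    using that by blast
  then have "countable (\<Union>v \<in> g ` W. {\<xi> \<in> W. g \<xi> = v})"
    using assms(2) by blast
  moreover have "(\<Union>v \<in> g ` W. {\<xi> \<in> W. g \<xi> = v}) = W" by auto
  ultimately show False using assms(1) by simp
qed

lemma uncountable_disjoint_subfamily:
  assumes om: "is_omega1 TYPE('w::wellorder)" and W: "uncountable (W::'w set)"
    and thin: "\<forall>p. countable {\<xi> \<in> W. p \<in> S \<xi>}" and fin: "\<forall>\<xi>\<in>W. finite (S \<xi>)"
  shows "\<exists>W' \<subseteq> W. uncountable W' \<and> (\<forall>\<xi>\<in>W'. \<forall>\<eta>\<in>W'. \<xi> \<noteq> \<eta> \<longrightarrow> S \<xi> \<inter> S \<eta> = {})"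
proof -
  have "countable {\<eta> \<in> W. \<not> S \<xi> \<inter> S \<eta> = {}}" if "\<xi> \<in> W" for \<xi>
  proof -
    have "countable (S \<xi>)" using fin that by (simp add: countable_finite)
    moreover have "countable {\<eta> \<in> W. p \<in> S \<eta>}" for p using thin by blast
    ultimately have "countable (\<Union>p \<in> S \<xi>. {\<eta> \<in> W. p \<in> S \<eta>})" by (rule countable_UN)
    moreover have "{\<eta> \<in> W. \<not> S \<xi> \<inter> S \<eta> = {}} = (\<Union>p \<in> S \<xi>. {\<eta> \<in> W. p \<in> S \<eta>})" by blast
    ultimately show ?thesis by simp
  qed
  then have conflicts: "\<forall>\<xi>\<in>W. countable {\<eta> \<in> W. \<not> S \<xi> \<inter> S \<eta> = {}}" by blast
  obtain f :: "'w \<Rightarrow> 'w" where f: "strict_mono f" "range f \<subseteq> W"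
    and disj: "\<And>\<xi> \<eta>. \<xi> < \<eta> \<Longrightarrow> S (f \<xi>) \<inter> S (f \<eta>) = {}"
    using omega1_greedy_enumeration[where R = "\<lambda>\<xi> \<eta>. S \<xi> \<inter> S \<eta> = {}", OF om W conflicts]
    by blast
  have "uncountable (range f)"
    using om strict_mono_imp_inj_on[OF f(1)] countable_image_inj_on
    unfolding is_omega1_def by blast
  moreover have "S (f \<xi>) \<inter> S (f \<eta>) = {}" if "f \<xi> \<noteq> f \<eta>" for \<xi> \<eta>
    using disj[of \<xi> \<eta>] disj[of \<eta> \<xi>] that by (cases \<xi> \<eta> rule: linorder_cases) auto
  then have "\<forall>\<xi>\<in>range f. \<forall>\<eta>\<in>range f. \<xi> \<noteq> \<eta> \<longrightarrow> S \<xi> \<inter> S \<eta> = {}"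
    by blast
  ultimately show ?thesis using f(2) by (intro exI[of _ "range f"]) simp
qed

lemma Delta_system_card:
  assumes om: "is_omega1 TYPE('w::wellorder)"
    and "uncountable (W::'w set)" and "\<forall>\<xi>\<in>W. finite (S \<xi>) \<and> card (S \<xi>) \<le> n"
  shows "\<exists>W' r. W' \<subseteq> W \<and> uncountable W' \<and> (\<forall>\<xi>\<in>W'. \<forall>\<eta>\<in>W'. \<xi> \<noteq> \<eta> \<longrightarrow> S \<xi> \<inter> S \<eta> = r)"
  using assms(2,3)
proof (induction n arbitrary: W S)
  case 0
  then have "\<forall>\<xi>\<in>W. S \<xi> = {}" using card_0_eq by blast
  then show ?case using "0.prems"(1) by blast
next
  case (Suc n)
  show ?case
  proof (cases "\<exists>p. uncountable {\<xi> \<in> W. p \<in> S \<xi>}")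
    case True
    then obtain p where p: "uncountable {\<xi> \<in> W. p \<in> S \<xi>}" by blast
    have "\<forall>\<xi>\<in>{\<xi> \<in> W. p \<in> S \<xi>}. finite (S \<xi> - {p}) \<and> card (S \<xi> - {p}) \<le> n"
      using Suc.prems(2) by auto
    from Suc.IH[of "{\<xi> \<in> W. p \<in> S \<xi>}" "\<lambda>\<xi>. S \<xi> - {p}", OF p this]
    obtain W' r where W': "W' \<subseteq> {\<xi> \<in> W. p \<in> S \<xi>}" "uncountable W'"
      and r: "\<forall>\<xi>\<in>W'. \<forall>\<eta>\<in>W'. \<xi> \<noteq> \<eta> \<longrightarrow> (S \<xi> - {p}) \<inter> (S \<eta> - {p}) = r"
      by blast
    have "S \<xi> \<inter> S \<eta> = insert p r" if "\<xi> \<in> W'" "\<eta> \<in> W'" "\<xi> \<noteq> \<eta>" for \<xi> \<eta>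
    proof -
      have "p \<in> S \<xi>" "p \<in> S \<eta>" using W'(1) that by auto
      then have "S \<xi> \<inter> S \<eta> = insert p ((S \<xi> - {p}) \<inter> (S \<eta> - {p}))" by blast
      with r that show ?thesis by simp
    qed
    moreover have "W' \<subseteq> W" using W'(1) by blast
    ultimately show ?thesis using W'(2) by blast
  next
    case False
    then have thin: "\<forall>p. countable {\<xi> \<in> W. p \<in> S \<xi>}" by blast
    have fin: "\<forall>\<xi>\<in>W. finite (S \<xi>)" using Suc.prems(2) by blast
    obtain W' where "W' \<subseteq> W" "uncountable W'" "\<forall>\<xi>\<in>W'. \<forall>\<eta>\<in>W'. \<xi> \<noteq> \<eta> \<longrightarrow> S \<xi> \<inter> S \<eta> = {}"
      using uncountable_disjoint_subfamily[OF om Suc.prems(1) thin fin] by blast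
    then show ?thesis by (intro exI[of _ W'] exI[of _ "{}"]) simp
  qed
qed

lemma Delta_system:
  assumes om: "is_omega1 TYPE('w::wellorder)"
    and W: "uncountable (W::'w set)" and fin: "\<And>\<xi>. \<xi> \<in> W \<Longrightarrow> finite (S \<xi>)"
  obtains W' r where "W' \<subseteq> W" "uncountable W'" "finite r"
    "\<And>\<xi> \<eta>. \<xi> \<in> W' \<Longrightarrow> \<eta> \<in> W' \<Longrightarrow> \<xi> \<noteq> \<eta> \<Longrightarrow> S \<xi> \<inter> S \<eta> = r"
proof -
  obtain n where n: "uncountable {\<xi> \<in> W. card (S \<xi>) = n}"
    by (rule uncountable_fiber[of W "\<lambda>\<xi>. card (S \<xi>)", OF W countableI_type])
  have "\<forall>\<xi>\<in>{\<xi> \<in> W. card (S \<xi>) = n}. finite (S \<xi>) \<and> card (S \<xi>) \<le> n"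
    using fin by simp
  from Delta_system_card[where S = S and n = n, OF om n this]
  obtain W' r where W': "W' \<subseteq> {\<xi> \<in> W. card (S \<xi>) = n}" "uncountable W'"
    and r: "\<forall>\<xi>\<in>W'. \<forall>\<eta>\<in>W'. \<xi> \<noteq> \<eta> \<longrightarrow> S \<xi> \<inter> S \<eta> = r"
    by (elim exE conjE)
  have "W' \<noteq> {}" using W'(2) by auto
  then obtain \<xi> where \<xi>: "\<xi> \<in> W'" by blast
  have "uncountable (W' - {\<xi>})" by (rule uncountable_minus_countable[OF W'(2)]) simp
  then have "W' - {\<xi>} \<noteq> {}" by (metis countable_empty)
  then obtain \<eta> where \<eta>: "\<eta> \<in> W'" "\<eta> \<noteq> \<xi>" by blast
  have "W' \<subseteq> W" using W'(1) by blast
  have "S \<xi> \<inter> S \<eta> = r" using r \<xi> \<eta> by auto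
  moreover have "finite (S \<xi>)" using fin \<open>W' \<subseteq> W\<close> \<xi> by blast
  ultimately have "finite r" by auto
  show ?thesis
    by (rule that[OF \<open>W' \<subseteq> W\<close> W'(2) \<open>finite r\<close>]) (use r in blast)
qed

lemma abs_diff_less_1_if_floor_eq:
  fixes u v :: real
  assumes "\<lfloor>u\<rfloor> = \<lfloor>v\<rfloor>"
  shows "\<bar>u - v\<bar> < 1"
proof -
  have "of_int \<lfloor>u\<rfloor> \<le> u" "u < of_int \<lfloor>u\<rfloor> + 1" "of_int \<lfloor>v\<rfloor> \<le> v" "v < of_int \<lfloor>v\<rfloor> + 1"
    by linarith+
  moreover have "real_of_int \<lfloor>u\<rfloor> = of_int \<lfloor>v\<rfloor>" using assms by simp
  ultimately show ?thesis by linarith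
qed

lemma uncountable_subset_close:
  fixes h :: "'a \<Rightarrow> real"
  assumes W: "uncountable W" and e: "0 < e"
  obtains W' where "W' \<subseteq> W" "uncountable W'" "\<And>\<xi> \<eta>. \<xi> \<in> W' \<Longrightarrow> \<eta> \<in> W' \<Longrightarrow> \<bar>h \<xi> - h \<eta>\<bar> < e"
proof -
  obtain k where k: "uncountable {\<xi> \<in> W. \<lfloor>h \<xi> / e\<rfloor> = k}"
    by (rule uncountable_fiber[of W "\<lambda>\<xi>. \<lfloor>h \<xi> / e\<rfloor>", OF W countableI_type])
  have close: "\<bar>h \<xi> - h \<eta>\<bar> < e"
    if "\<xi> \<in> {\<xi> \<in> W. \<lfloor>h \<xi> / e\<rfloor> = k}" "\<eta> \<in> {\<xi> \<in> W. \<lfloor>h \<xi> / e\<rfloor> = k}" for \<xi> \<eta>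
  proof -
    have "\<bar>h \<xi> / e - h \<eta> / e\<bar> < 1" using that by (intro abs_diff_less_1_if_floor_eq) simp
    then show ?thesis using e by (simp add: abs_divide flip: diff_divide_distrib)
  qed
  show ?thesis
  proof (rule that)
    show "{\<xi> \<in> W. \<lfloor>h \<xi> / e\<rfloor> = k} \<subseteq> W" by blast
  qed (fact k close)+
qed

lemma uncountable_subset_close_on:
  fixes h :: "'a \<Rightarrow> 'b \<Rightarrow> real"
  assumes r: "finite r" and W: "uncountable W" and e: "0 < e"
  obtains W' where "W' \<subseteq> W" "uncountable W'"
    "\<And>\<xi> \<eta> \<alpha>. \<xi> \<in> W' \<Longrightarrow> \<eta> \<in> W' \<Longrightarrow> \<alpha> \<in> r \<Longrightarrow> \<bar>h \<xi> \<alpha> - h \<eta> \<alpha>\<bar> < e"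
proof -
  have "\<exists>W'. W' \<subseteq> W \<and> uncountable W' \<and> (\<forall>\<xi>\<in>W'. \<forall>\<eta>\<in>W'. \<forall>\<alpha>\<in>r. \<bar>h \<xi> \<alpha> - h \<eta> \<alpha>\<bar> < e)"
    using r W
  proof (induction r arbitrary: W rule: finite_induct)
    case empty
    then show ?case by blast
  next
    case (insert \<alpha> r)
    from insert.IH[OF insert.prems] obtain W1 where W1: "W1 \<subseteq> W" "uncountable W1"
      and close: "\<forall>\<xi>\<in>W1. \<forall>\<eta>\<in>W1. \<forall>\<beta>\<in>r. \<bar>h \<xi> \<beta> - h \<eta> \<beta>\<bar> < e"
      by blast
    obtain W2 where W2: "W2 \<subseteq> W1" "uncountable W2"
      and close_\<alpha>: "\<And>\<xi> \<eta>. \<xi> \<in> W2 \<Longrightarrow> \<eta> \<in> W2 \<Longrightarrow> \<bar>h \<xi> \<alpha> - h \<eta> \<alpha>\<bar> < e"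
      using uncountable_subset_close[of W1 e "\<lambda>\<xi>. h \<xi> \<alpha>"] W1(2) e by blast
    have "\<forall>\<xi>\<in>W2. \<forall>\<eta>\<in>W2. \<forall>\<beta>\<in>insert \<alpha> r. \<bar>h \<xi> \<beta> - h \<eta> \<beta>\<bar> < e"
      using close close_\<alpha> W2(1) by blast
    moreover have "W2 \<subseteq> W" using W1(1) W2(1) by blast
    ultimately show ?case using W2(2) by blast
  qed
  then obtain W' where "W' \<subseteq> W" "uncountable W'"
    and "\<forall>\<xi>\<in>W'. \<forall>\<eta>\<in>W'. \<forall>\<alpha>\<in>r. \<bar>h \<xi> \<alpha> - h \<eta> \<alpha>\<bar> < e"
    by blast
  then show ?thesis by (intro that) auto
qed

lemma uncountable_subset_L2_close:
  fixes h :: "'a \<Rightarrow> 'b \<Rightarrow> real"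
  assumes r: "finite r" and W: "uncountable W" and e: "0 < e"
  obtains W' where "W' \<subseteq> W" "uncountable W'"
    "\<And>\<xi> \<eta>. \<xi> \<in> W' \<Longrightarrow> \<eta> \<in> W' \<Longrightarrow> L2_set (\<lambda>\<alpha>. h \<xi> \<alpha> - h \<eta> \<alpha>) r \<le> e"
proof -
  define g where "g = e / (card r + 1)"
  have "0 < g" using e by (simp add: g_def)
  obtain W' where W': "W' \<subseteq> W" "uncountable W'"
    and close: "\<And>\<xi> \<eta> \<alpha>. \<xi> \<in> W' \<Longrightarrow> \<eta> \<in> W' \<Longrightarrow> \<alpha> \<in> r \<Longrightarrow> \<bar>h \<xi> \<alpha> - h \<eta> \<alpha>\<bar> < g"
    using uncountable_subset_close_on[where h = h, OF r W \<open>0 < g\<close>] by blast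
  have "L2_set (\<lambda>\<alpha>. h \<xi> \<alpha> - h \<eta> \<alpha>) r \<le> e" if "\<xi> \<in> W'" "\<eta> \<in> W'" for \<xi> \<eta>
  proof -
    have "L2_set (\<lambda>\<alpha>. h \<xi> \<alpha> - h \<eta> \<alpha>) r \<le> (\<Sum>\<alpha>\<in>r. \<bar>h \<xi> \<alpha> - h \<eta> \<alpha>\<bar>)"
      by (rule L2_set_le_sum_abs)
    also have "\<dots> \<le> card r * g"
      using close[OF that] by (intro sum_bounded_above) (simp add: less_imp_le)
    also have "\<dots> \<le> e" using e by (simp add: g_def field_simps)
    finally show ?thesis .
  qed
  then show ?thesis by (rule that[OF W'])
qed

lemma strong_T_coloring_monochromatic_pair:
  fixes c :: "'w::wellorder set \<Rightarrow> 'i::zero_neq_one \<times> 'j"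
  assumes om: "is_omega1 TYPE('w)" and strong: "strong_T_coloring c I J"
    and W: "uncountable (W :: 'w set)"
    and A: "\<And>\<xi>. \<xi> \<in> W \<Longrightarrow> finite (A \<xi>) \<and> A \<xi> \<noteq> {}"
    and disj: "\<And>\<xi> \<eta>. \<xi> \<in> W \<Longrightarrow> \<eta> \<in> W \<Longrightarrow> \<xi> \<noteq> \<eta> \<Longrightarrow> A \<xi> \<inter> A \<eta> = {}"
    and k: "k = 0 \<or> k = 1"
  obtains \<xi> \<eta> where "\<xi> \<in> W" "\<eta> \<in> W" "\<xi> < \<eta>"
    "\<And>u v. u \<in> A \<xi> \<Longrightarrow> v \<in> A \<eta> \<Longrightarrow> fst (c {u, v}) = k"
proof -
  have no_conflicts: "\<forall>\<xi>\<in>W. countable {\<eta> \<in> W. \<not> True}" by simp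
  obtain f :: "'w \<Rightarrow> 'w" where f: "strict_mono f" "range f \<subseteq> W"
    using omega1_greedy_enumeration[where R = "\<lambda>_ _. True", OF om W no_conflicts] by auto
  then have fW: "f \<xi> \<in> W" for \<xi> by blast
  have "(\<forall>\<xi>. finite (A (f \<xi>)) \<and> A (f \<xi>) \<noteq> {}) \<and> (\<forall>\<xi> \<eta>. \<xi> \<noteq> \<eta> \<longrightarrow> A (f \<xi>) \<inter> A (f \<eta>) = {})"
    using A disj fW strict_mono_eq[OF f(1)] by metis
  then have "(\<exists>\<xi> \<eta>. \<xi> < \<eta> \<and> (fst \<circ> c) ` otimes (A (f \<xi>)) (A (f \<eta>)) = {0}) \<and>
      (\<exists>\<xi> \<eta>. \<xi> < \<eta> \<and> (fst \<circ> c) ` otimes (A (f \<xi>)) (A (f \<eta>)) = {1})"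
    using strong unfolding strong_T_coloring_def by (elim conjE allE[of _ "\<lambda>\<xi>. A (f \<xi>)"]) simp
  then obtain \<xi> \<eta> where "\<xi> < \<eta>" and col: "(fst \<circ> c) ` otimes (A (f \<xi>)) (A (f \<eta>)) = {k}"
    using k by blast
  have "fst (c {u, v}) = k" if "u \<in> A (f \<xi>)" "v \<in> A (f \<eta>)" for u v
  proof -
    have "{u, v} \<in> otimes (A (f \<xi>)) (A (f \<eta>))" unfolding otimes_def using that by blast
    then show ?thesis using col by (metis comp_apply image_eqI singletonD)
  qed
  moreover have "f \<xi> < f \<eta>" using f(1) \<open>\<xi> < \<eta>\<close> by (simp add: strict_mono_less)
  ultimately show ?thesis using fW by (intro that) auto
qed

section \<open>The norm of X_A\<close>

definition restrict_zero :: "'a set \<Rightarrow> ('a \<Rightarrow> real) \<Rightarrow> 'a \<Rightarrow> real" where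
  "restrict_zero T f \<alpha> = (if \<alpha> \<in> T then f \<alpha> else 0)"

lemma L2_set_restrict_zero: "finite a \<Longrightarrow> L2_set (restrict_zero T f) a = L2_set f (a \<inter> T)"
  unfolding L2_set_def restrict_zero_def
  by (simp add: sum.inter_restrict if_distrib[of "\<lambda>t. t\<^sup>2"] cong: if_cong)

lemma L2_set_mono_set: "finite B \<Longrightarrow> A \<subseteq> B \<Longrightarrow> L2_set f A \<le> L2_set f B"
  unfolding L2_set_def by (intro real_sqrt_le_mono sum_mono2) auto

lemma L2_set_Un_le:
  assumes "finite A" "finite B" "A \<inter> B = {}"
  shows "L2_set f (A \<union> B) \<le> L2_set f A + L2_set f B"
  unfolding L2_set_def using assms
  by (simp add: sum.union_disjoint sqrt_add_le_add_sqrt sum_nonneg)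

lemma L2_set_minus_commute: "L2_set (\<lambda>\<alpha>. f \<alpha> - g \<alpha>) A = L2_set (\<lambda>\<alpha>. g \<alpha> - f \<alpha>) A"
  unfolding L2_set_def by (simp add: power2_commute)

lemma L2_set_le_normA: "finite_normA \<A> x \<Longrightarrow> a \<in> \<A> \<Longrightarrow> L2_set x a \<le> normA \<A> x"
  unfolding normA_def finite_normA_def L2_set_def by (rule cSUP_upper)

lemma normA_least: "\<A> \<noteq> {} \<Longrightarrow> (\<And>a. a \<in> \<A> \<Longrightarrow> L2_set x a \<le> M) \<Longrightarrow> normA \<A> x \<le> M"
  unfolding normA_def L2_set_def by (rule cSUP_least)

lemma finite_normA_if_L2_set_le: "(\<And>a. a \<in> \<A> \<Longrightarrow> L2_set x a \<le> M) \<Longrightarrow> finite_normA \<A> x"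
  unfolding finite_normA_def L2_set_def bdd_above_def by blast

lemma normA_nonneg: "finite_normA \<A> x \<Longrightarrow> {} \<in> \<A> \<Longrightarrow> 0 \<le> normA \<A> x"
  using L2_set_le_normA[of \<A> x "{}"] by simp

lemma normA_minus_commute: "normA \<A> (\<lambda>\<alpha>. p \<alpha> - q \<alpha>) = normA \<A> (\<lambda>\<alpha>. q \<alpha> - p \<alpha>)"
  unfolding normA_def by (simp add: power2_commute)

lemma finite_normA_if_finite_support:
  assumes "\<forall>a\<in>\<A>. finite a" and "finite {\<alpha>. y \<alpha> \<noteq> 0}"
  shows "finite_normA \<A> y"
proof (rule finite_normA_if_L2_set_le)
  fix a assume "a \<in> \<A>"
  have "L2_set y a = L2_set y (a \<inter> {\<alpha>. y \<alpha> \<noteq> 0})"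
    unfolding L2_set_def
    by (intro arg_cong[where f = sqrt] sum.mono_neutral_right) (use assms \<open>a \<in> \<A>\<close> in auto)
  also have "\<dots> \<le> L2_set y {\<alpha>. y \<alpha> \<noteq> 0}" by (rule L2_set_mono_set) (use assms in auto)
  finally show "L2_set y a \<le> L2_set y {\<alpha>. y \<alpha> \<noteq> 0}" .
qed

lemma L2_set_add_le_normA:
  assumes "finite_normA \<A> p" "finite_normA \<A> q" "a \<in> \<A>"
  shows "L2_set (\<lambda>\<alpha>. p \<alpha> + q \<alpha>) a \<le> normA \<A> p + normA \<A> q"
  using L2_set_triangle_ineq[of p q a] L2_set_le_normA[OF assms(1,3)] L2_set_le_normA[OF assms(2,3)]
  by linarith

lemma finite_normA_add: "finite_normA \<A> p \<Longrightarrow> finite_normA \<A> q \<Longrightarrow> finite_normA \<A> (\<lambda>\<alpha>. p \<alpha> + q \<alpha>)"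
  by (rule finite_normA_if_L2_set_le) (rule L2_set_add_le_normA)

lemma normA_triangle_ineq:
  "\<A> \<noteq> {} \<Longrightarrow> finite_normA \<A> p \<Longrightarrow> finite_normA \<A> q \<Longrightarrow>
    normA \<A> (\<lambda>\<alpha>. p \<alpha> + q \<alpha>) \<le> normA \<A> p + normA \<A> q"
  by (rule normA_least) (simp_all add: L2_set_add_le_normA)

lemma L2_set_abs_mono: "(\<And>\<alpha>. \<bar>z \<alpha>\<bar> \<le> \<bar>p \<alpha>\<bar>) \<Longrightarrow> L2_set z a \<le> L2_set p a"
  unfolding L2_set_def by (intro real_sqrt_le_mono sum_mono) (metis abs_le_square_iff)

lemma finite_normA_abs_mono:
  "finite_normA \<A> p \<Longrightarrow> (\<And>\<alpha>. \<bar>z \<alpha>\<bar> \<le> \<bar>p \<alpha>\<bar>) \<Longrightarrow> finite_normA \<A> z"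
  by (rule finite_normA_if_L2_set_le) (rule order_trans[OF L2_set_abs_mono L2_set_le_normA])

lemma normA_abs_mono:
  "\<A> \<noteq> {} \<Longrightarrow> finite_normA \<A> p \<Longrightarrow> (\<And>\<alpha>. \<bar>z \<alpha>\<bar> \<le> \<bar>p \<alpha>\<bar>) \<Longrightarrow> normA \<A> z \<le> normA \<A> p"
  by (rule normA_least) (simp_all add: order_trans[OF L2_set_abs_mono L2_set_le_normA])

lemma finite_normA_diff:
  assumes "finite_normA \<A> p" "finite_normA \<A> q"
  shows "finite_normA \<A> (\<lambda>\<alpha>. p \<alpha> - q \<alpha>)"
proof -
  have "finite_normA \<A> (\<lambda>\<alpha>. - q \<alpha>)" by (rule finite_normA_abs_mono[OF assms(2)]) simp
  from finite_normA_add[OF assms(1) this] show ?thesis by simp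
qed

lemma normA_diff_triangle_ineq:
  assumes "\<A> \<noteq> {}" "finite_normA \<A> p" "finite_normA \<A> q" "finite_normA \<A> s"
  shows "normA \<A> (\<lambda>\<alpha>. p \<alpha> - s \<alpha>) \<le> normA \<A> (\<lambda>\<alpha>. p \<alpha> - q \<alpha>) + normA \<A> (\<lambda>\<alpha>. q \<alpha> - s \<alpha>)"
  using normA_triangle_ineq[OF assms(1) finite_normA_diff[OF assms(2,3)]
      finite_normA_diff[OF assms(3,4)]]
  by simp

lemma normA_diff_le_perturb:
  assumes "\<A> \<noteq> {}"
    and fin: "finite_normA \<A> p" "finite_normA \<A> q" "finite_normA \<A> p'" "finite_normA \<A> q'"
  shows "normA \<A> (\<lambda>\<alpha>. p \<alpha> - q \<alpha>)
    \<le> normA \<A> (\<lambda>\<alpha>. p' \<alpha> - q' \<alpha>) + normA \<A> (\<lambda>\<alpha>. p \<alpha> - p' \<alpha>) + normA \<A> (\<lambda>\<alpha>. q \<alpha> - q' \<alpha>)"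
  using normA_diff_triangle_ineq[OF assms(1) fin(1,3,2)]
    normA_diff_triangle_ineq[OF assms(1) fin(3,4,2)]
    normA_minus_commute[of \<A> q' q]
  by linarith

lemma power2_le_if_le_sqrt: "0 \<le> u \<Longrightarrow> u \<le> sqrt v \<Longrightarrow> u\<^sup>2 \<le> v"
  by (metis order.trans power_mono real_sqrt_ge_0_iff real_sqrt_pow2)

lemma normA_sq_add_le:
  assumes "\<A> \<noteq> {}" "0 \<le> M"
    and le: "\<And>a b. a \<in> \<A> \<Longrightarrow> b \<in> \<A> \<Longrightarrow> (L2_set p a)\<^sup>2 + (L2_set q b)\<^sup>2 \<le> M\<^sup>2"
  shows "(normA \<A> p)\<^sup>2 + (normA \<A> q)\<^sup>2 \<le> M\<^sup>2"
proof -
  obtain a0 where a0: "a0 \<in> \<A>" using assms(1) by blast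
  have bounded: "L2_set p a \<le> M" "L2_set q a \<le> M" if "a \<in> \<A>" for a
  proof -
    have "(L2_set p a)\<^sup>2 \<le> M\<^sup>2" "(L2_set q a)\<^sup>2 \<le> M\<^sup>2"
      using le[OF that that] zero_le_power2[of "L2_set p a"] zero_le_power2[of "L2_set q a"]
      by linarith+
    then show "L2_set p a \<le> M" "L2_set q a \<le> M" using assms(2) by (auto intro: power2_le_imp_le)
  qed
  have fin: "finite_normA \<A> p" "finite_normA \<A> q"
    using bounded by (auto intro: finite_normA_if_L2_set_le)
  have nonneg: "0 \<le> normA \<A> p" "0 \<le> normA \<A> q"
    using L2_set_le_normA[OF fin(1) a0] L2_set_le_normA[OF fin(2) a0] L2_set_nonneg[of p a0]
      L2_set_nonneg[of q a0]
    by linarith+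
  have "L2_set q b \<le> sqrt (M\<^sup>2 - (normA \<A> p)\<^sup>2)" if b: "b \<in> \<A>" for b
  proof -
    have "normA \<A> p \<le> sqrt (M\<^sup>2 - (L2_set q b)\<^sup>2)"
    proof (rule normA_least[OF assms(1)])
      fix a assume "a \<in> \<A>"
      show "L2_set p a \<le> sqrt (M\<^sup>2 - (L2_set q b)\<^sup>2)"
        by (rule real_le_rsqrt) (use le[OF \<open>a \<in> \<A>\<close> b] in linarith)
    qed
    then have "(normA \<A> p)\<^sup>2 \<le> M\<^sup>2 - (L2_set q b)\<^sup>2" by (rule power2_le_if_le_sqrt[OF nonneg(1)])
    then show ?thesis by (intro real_le_rsqrt) linarith
  qed
  then have "normA \<A> q \<le> sqrt (M\<^sup>2 - (normA \<A> p)\<^sup>2)" by (rule normA_least[OF assms(1)])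
  then have "(normA \<A> q)\<^sup>2 \<le> M\<^sup>2 - (normA \<A> p)\<^sup>2" by (rule power2_le_if_le_sqrt[OF nonneg(2)])
  then show ?thesis by linarith
qed

section \<open>T_0-families\<close>

lemma T0_family_finite: "a \<in> T0_family c \<Longrightarrow> finite a"
  unfolding T0_family_def by simp

lemma empty_in_T0_family: "{} \<in> T0_family c"
  unfolding T0_family_def pairs_of_def by auto

lemma T0_family_nonempty: "T0_family c \<noteq> {}"
  using empty_in_T0_family by blast

lemma T0_family_subset: "a \<in> T0_family c \<Longrightarrow> b \<subseteq> a \<Longrightarrow> b \<in> T0_family c"
  unfolding T0_family_def pairs_of_def image_subset_iff by (auto intro: finite_subset)

lemma T0_family_colour:
  "a \<in> T0_family c \<Longrightarrow> u \<in> a \<Longrightarrow> v \<in> a \<Longrightarrow> u \<noteq> v \<Longrightarrow> fst (c {u, v}) = 0"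
  unfolding T0_family_def pairs_of_def image_subset_iff by auto

lemma T0_family_Un:
  assumes a: "a \<in> T0_family c" and b: "b \<in> T0_family c"
    and col: "\<And>u v. u \<in> a \<Longrightarrow> v \<in> b \<Longrightarrow> fst (c {u, v}) = 0"
  shows "a \<union> b \<in> T0_family c"
proof -
  have "fst (c p) = 0" if p: "p \<subseteq> a \<union> b" "card p = 2" for p
  proof -
    obtain u v where uv: "p = {u, v}" "u \<noteq> v" using p(2) card_2_iff by metis
    have "u \<in> a \<union> b" "v \<in> a \<union> b" using p uv by auto
    then consider "u \<in> a" "v \<in> a" | "u \<in> a" "v \<in> b" | "u \<in> b" "v \<in> a" | "u \<in> b" "v \<in> b"
      by blast
    then show ?thesis
      using T0_family_colour[OF a _ _ uv(2)] T0_family_colour[OF b _ _ uv(2)]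
        col[of u v] col[of v u]
      by cases (auto simp: uv(1) insert_commute)
  qed
  then show ?thesis
    using T0_family_finite[OF a] T0_family_finite[OF b] unfolding T0_family_def pairs_of_def by auto
qed

lemma T0_family_misses_one_side_if_colour_1:
  fixes c :: "'w set \<Rightarrow> 'i::zero_neq_one \<times> 'j"
  assumes a: "a \<in> T0_family c" and "A \<inter> B = {}"
    and col: "\<And>u v. u \<in> A \<Longrightarrow> v \<in> B \<Longrightarrow> fst (c {u, v}) = 1"
  shows "a \<inter> A = {} \<or> a \<inter> B = {}"
proof (rule ccontr)
  assume "\<not> ?thesis"
  then obtain u v where u: "u \<in> a" "u \<in> A" and v: "v \<in> a" "v \<in> B" by blast
  have "u \<noteq> v" using u v \<open>A \<inter> B = {}\<close> by blast
  have "fst (c {u, v}) = 0" by (rule T0_family_colour[OF a u(1) v(1) \<open>u \<noteq> v\<close>])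
  then show False using col[OF u(2) v(2)] by simp
qed

lemma L2_set_diff_outside_root:
  assumes "finite a" "a \<inter> Ty = {}"
    and y0: "\<And>\<alpha>. \<alpha> \<notin> r \<union> Ty \<Longrightarrow> y \<alpha> = 0" and z0: "\<And>\<alpha>. \<alpha> \<notin> r \<union> Tz \<Longrightarrow> z \<alpha> = 0"
  shows "L2_set (\<lambda>\<alpha>. y \<alpha> - z \<alpha>) (a - r) \<le> L2_set (restrict_zero Tz z) a"
proof -
  have "L2_set (\<lambda>\<alpha>. y \<alpha> - z \<alpha>) (a - r) = L2_set (restrict_zero Tz z) (a - r)"
    unfolding L2_set_def
  proof (intro arg_cong[where f = sqrt] sum.cong refl)
    fix \<alpha> assume \<alpha>: "\<alpha> \<in> a - r"
    then have "y \<alpha> = 0" using assms(2) y0 by blast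
    moreover have "\<alpha> \<notin> Tz \<Longrightarrow> z \<alpha> = 0" using \<alpha> z0 by blast
    ultimately show "(y \<alpha> - z \<alpha>)\<^sup>2 = (restrict_zero Tz z \<alpha>)\<^sup>2"
      by (auto simp: restrict_zero_def)
  qed
  also have "\<dots> \<le> L2_set (restrict_zero Tz z) a" by (rule L2_set_mono_set) (use assms(1) in auto)
  finally show ?thesis .
qed

lemma finite_normA_restrict_zero: "\<forall>a\<in>\<A>. finite a \<Longrightarrow> finite T \<Longrightarrow> finite_normA \<A> (restrict_zero T f)"
  by (rule finite_normA_if_finite_support)
    (auto simp: restrict_zero_def elim: finite_subset[rotated])

lemma normA_diff_le_if_colour_1:
  fixes c :: "'w set \<Rightarrow> 'i::zero_neq_one \<times> 'j"
  assumes r: "finite r" and Ty: "finite Ty" and Tz: "finite Tz" and "Ty \<inter> Tz = {}"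
    and y0: "\<And>\<alpha>. \<alpha> \<notin> r \<union> Ty \<Longrightarrow> y \<alpha> = 0" and z0: "\<And>\<alpha>. \<alpha> \<notin> r \<union> Tz \<Longrightarrow> z \<alpha> = 0"
    and col: "\<And>u v. u \<in> Ty \<Longrightarrow> v \<in> Tz \<Longrightarrow> fst (c {u, v}) = 1"
  shows "normA (T0_family c) (\<lambda>\<alpha>. y \<alpha> - z \<alpha>)
    \<le> L2_set (\<lambda>\<alpha>. y \<alpha> - z \<alpha>) r
      + max (normA (T0_family c) (restrict_zero Ty y)) (normA (T0_family c) (restrict_zero Tz z))"
proof (rule normA_least)
  show "T0_family c \<noteq> {}" by (rule T0_family_nonempty)
  fix a assume a: "a \<in> T0_family c"
  have "finite a" using a by (rule T0_family_finite)
  have fin_tails: "finite_normA (T0_family c) (restrict_zero Ty y)"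
    "finite_normA (T0_family c) (restrict_zero Tz z)"
    using Ty Tz T0_family_finite by (blast intro: finite_normA_restrict_zero)+
  have "L2_set (\<lambda>\<alpha>. y \<alpha> - z \<alpha>) (a - r)
      \<le> max (normA (T0_family c) (restrict_zero Ty y)) (normA (T0_family c) (restrict_zero Tz z))"
    using T0_family_misses_one_side_if_colour_1[OF a \<open>Ty \<inter> Tz = {}\<close> col]
  proof
    assume "a \<inter> Ty = {}"
    have "L2_set (\<lambda>\<alpha>. y \<alpha> - z \<alpha>) (a - r) \<le> L2_set (restrict_zero Tz z) a"
      by (rule L2_set_diff_outside_root[where Ty = Ty])
        (use \<open>finite a\<close> \<open>a \<inter> Ty = {}\<close> y0 z0 in blast)+
    with L2_set_le_normA[OF fin_tails(2) a] show ?thesis by linarith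
  next
    assume "a \<inter> Tz = {}"
    have "L2_set (\<lambda>\<alpha>. z \<alpha> - y \<alpha>) (a - r) \<le> L2_set (restrict_zero Ty y) a"
      by (rule L2_set_diff_outside_root[where Ty = Tz])
        (use \<open>finite a\<close> \<open>a \<inter> Tz = {}\<close> y0 z0 in blast)+
    with L2_set_le_normA[OF fin_tails(1) a] show ?thesis
      by (simp add: L2_set_minus_commute[of y])
  qed
  moreover have "L2_set (\<lambda>\<alpha>. y \<alpha> - z \<alpha>) (a \<inter> r) \<le> L2_set (\<lambda>\<alpha>. y \<alpha> - z \<alpha>) r"
    by (rule L2_set_mono_set) (use r in auto)
  moreover have "L2_set (\<lambda>\<alpha>. y \<alpha> - z \<alpha>) a
      \<le> L2_set (\<lambda>\<alpha>. y \<alpha> - z \<alpha>) (a \<inter> r) + L2_set (\<lambda>\<alpha>. y \<alpha> - z \<alpha>) (a - r)"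
    using L2_set_Un_le[of "a \<inter> r" "a - r" "\<lambda>\<alpha>. y \<alpha> - z \<alpha>"] \<open>finite a\<close>
    by (simp add: Int_Diff_Un Int_Diff_disjoint)
  ultimately show "L2_set (\<lambda>\<alpha>. y \<alpha> - z \<alpha>) a
      \<le> L2_set (\<lambda>\<alpha>. y \<alpha> - z \<alpha>) r
        + max (normA (T0_family c) (restrict_zero Ty y)) (normA (T0_family c) (restrict_zero Tz z))"
    by linarith
qed

lemma normA_tails_sq_le_if_colour_0:
  fixes c :: "'w set \<Rightarrow> 'i::zero_neq_one \<times> 'j"
  assumes "Ty \<inter> Tz = {}"
    and y0: "\<And>\<alpha>. \<alpha> \<in> Tz \<Longrightarrow> y \<alpha> = 0" and z0: "\<And>\<alpha>. \<alpha> \<in> Ty \<Longrightarrow> z \<alpha> = 0"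
    and col: "\<And>u v. u \<in> Ty \<Longrightarrow> v \<in> Tz \<Longrightarrow> fst (c {u, v}) = 0"
    and fin: "finite_normA (T0_family c) (\<lambda>\<alpha>. y \<alpha> - z \<alpha>)"
  shows "(normA (T0_family c) (restrict_zero Ty y))\<^sup>2 + (normA (T0_family c) (restrict_zero Tz z))\<^sup>2
    \<le> (normA (T0_family c) (\<lambda>\<alpha>. y \<alpha> - z \<alpha>))\<^sup>2"
proof (rule normA_sq_add_le)
  show "T0_family c \<noteq> {}" by (rule T0_family_nonempty)
  show "0 \<le> normA (T0_family c) (\<lambda>\<alpha>. y \<alpha> - z \<alpha>)" using fin empty_in_T0_family by (rule normA_nonneg)
  fix a b assume a: "a \<in> T0_family c" and b: "b \<in> T0_family c"
  have fin_ab: "finite (a \<inter> Ty)" "finite (b \<inter> Tz)" using a b by (auto dest: T0_family_finite)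
  have disj: "(a \<inter> Ty) \<inter> (b \<inter> Tz) = {}" using \<open>Ty \<inter> Tz = {}\<close> by blast
  have "(a \<inter> Ty) \<union> (b \<inter> Tz) \<in> T0_family c"
    by (rule T0_family_Un) (auto intro: T0_family_subset[OF a] T0_family_subset[OF b] col)
  have "L2_set (restrict_zero Ty y) a = L2_set y (a \<inter> Ty)"
    "L2_set (restrict_zero Tz z) b = L2_set z (b \<inter> Tz)"
    using a b by (simp_all add: L2_set_restrict_zero T0_family_finite)
  then have "(L2_set (restrict_zero Ty y) a)\<^sup>2 + (L2_set (restrict_zero Tz z) b)\<^sup>2
      = (\<Sum>\<alpha> \<in> a \<inter> Ty. (y \<alpha>)\<^sup>2) + (\<Sum>\<alpha> \<in> b \<inter> Tz. (z \<alpha>)\<^sup>2)"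
    by (simp add: L2_set_def sum_nonneg)
  also have "\<dots> = (\<Sum>\<alpha> \<in> (a \<inter> Ty) \<union> (b \<inter> Tz). (y \<alpha> - z \<alpha>)\<^sup>2)"
    using y0 z0 by (simp add: sum.union_disjoint[OF fin_ab disj])
  also have "\<dots> = (L2_set (\<lambda>\<alpha>. y \<alpha> - z \<alpha>) ((a \<inter> Ty) \<union> (b \<inter> Tz)))\<^sup>2"
    by (simp add: L2_set_def sum_nonneg)
  also have "\<dots> \<le> (normA (T0_family c) (\<lambda>\<alpha>. y \<alpha> - z \<alpha>))\<^sup>2"
    by (intro power_mono L2_set_le_normA fin \<open>(a \<inter> Ty) \<union> (b \<inter> Tz) \<in> T0_family c\<close> L2_set_nonneg)
  finally show "(L2_set (restrict_zero Ty y) a)\<^sup>2 + (L2_set (restrict_zero Tz z) b)\<^sup>2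
      \<le> (normA (T0_family c) (\<lambda>\<alpha>. y \<alpha> - z \<alpha>))\<^sup>2" .
qed

section \<open>The separated family\<close>

lemma Delta_system_tails:
  fixes S :: "'w::wellorder \<Rightarrow> 'w set"
  assumes om: "is_omega1 TYPE('w)" and fin: "\<And>\<xi>. finite (S \<xi>)"
  obtains W r T where "uncountable W" "finite r"
    "\<And>\<xi>. \<xi> \<in> W \<Longrightarrow> finite (T \<xi>)" "\<And>\<xi>. \<xi> \<in> W \<Longrightarrow> T \<xi> \<noteq> {}"
    "\<And>\<xi>. \<xi> \<in> W \<Longrightarrow> r \<inter> T \<xi> = {}" "\<And>\<xi>. \<xi> \<in> W \<Longrightarrow> S \<xi> \<subseteq> r \<union> T \<xi>"
    "\<And>\<xi> \<eta>. \<xi> \<in> W \<Longrightarrow> \<eta> \<in> W \<Longrightarrow> \<xi> \<noteq> \<eta> \<Longrightarrow> T \<xi> \<inter> T \<eta> = {}"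
proof -
  have "uncountable (UNIV :: 'w set)" using om by (simp add: is_omega1_def)
  \<comment> \<open>Adding \<open>\<xi>\<close> to its own set keeps the tails nonempty.\<close>
  then obtain W1 r where "W1 \<subseteq> UNIV" and W1: "uncountable W1" and "finite r"
    and root: "\<And>\<xi> \<eta>. \<xi> \<in> W1 \<Longrightarrow> \<eta> \<in> W1 \<Longrightarrow> \<xi> \<noteq> \<eta> \<Longrightarrow> insert \<xi> (S \<xi>) \<inter> insert \<eta> (S \<eta>) = r"
  proof (rule Delta_system[where S = "\<lambda>\<xi>. insert \<xi> (S \<xi>)", OF om])
    show "finite (insert \<xi> (S \<xi>))" for \<xi> using fin by simp
  qed (rule that)
  define T where "T \<xi> = insert \<xi> (S \<xi>) - r" for \<xi>
  have "uncountable (W1 - r)"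
    by (rule uncountable_minus_countable[OF W1 countable_finite[OF \<open>finite r\<close>]])
  show ?thesis
  proof (rule that[of "W1 - r" r T])
    fix \<xi> \<eta> assume "\<xi> \<in> W1 - r" "\<eta> \<in> W1 - r" "\<xi> \<noteq> \<eta>"
    then show "T \<xi> \<inter> T \<eta> = {}" using root unfolding T_def by blast
  qed (use \<open>uncountable (W1 - r)\<close> \<open>finite r\<close> fin in \<open>auto simp: T_def\<close>)
qed

locale Delta_approximation =
  fixes c :: "'w::wellorder set \<Rightarrow> 'i::zero_neq_one \<times> 'j"
    and x y :: "'w \<Rightarrow> 'w \<Rightarrow> real" and e :: real
    and W r :: "'w set" and T :: "'w \<Rightarrow> 'w set"
  assumes e_pos: "0 < e" and e_le: "e \<le> 1 / 5"
    and x_finite: "\<And>\<xi>. finite_normA (T0_family c) (x \<xi>)"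
    and x_norm: "\<And>\<xi>. normA (T0_family c) (x \<xi>) = 1"
    and x_separated: "\<And>\<xi> \<eta>. \<xi> \<noteq> \<eta> \<Longrightarrow> 1 - e \<le> normA (T0_family c) (\<lambda>\<gamma>. x \<xi> \<gamma> - x \<eta> \<gamma>)"
    and y_finite: "\<And>\<xi>. finite_normA (T0_family c) (y \<xi>)"
    and y_approx: "\<And>\<xi>. normA (T0_family c) (\<lambda>\<gamma>. x \<xi> \<gamma> - y \<xi> \<gamma>) < e"
    and W_uncountable: "uncountable W" and r_finite: "finite r"
    and T_finite: "\<And>\<xi>. \<xi> \<in> W \<Longrightarrow> finite (T \<xi>)"
    and T_nonempty: "\<And>\<xi>. \<xi> \<in> W \<Longrightarrow> T \<xi> \<noteq> {}"
    and root_tail_disjoint: "\<And>\<xi>. \<xi> \<in> W \<Longrightarrow> r \<inter> T \<xi> = {}"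
    and tails_disjoint: "\<And>\<xi> \<eta>. \<xi> \<in> W \<Longrightarrow> \<eta> \<in> W \<Longrightarrow> \<xi> \<noteq> \<eta> \<Longrightarrow> T \<xi> \<inter> T \<eta> = {}"
    and y_support: "\<And>\<xi> \<alpha>. \<xi> \<in> W \<Longrightarrow> \<alpha> \<notin> r \<union> T \<xi> \<Longrightarrow> y \<xi> \<alpha> = 0"
    and root_close: "\<And>\<xi> \<eta>. \<xi> \<in> W \<Longrightarrow> \<eta> \<in> W \<Longrightarrow> L2_set (\<lambda>\<alpha>. y \<xi> \<alpha> - y \<eta> \<alpha>) r \<le> e"
    and tail_norm_close: "\<And>\<xi> \<eta>. \<xi> \<in> W \<Longrightarrow> \<eta> \<in> W \<Longrightarrow>
      \<bar>normA (T0_family c) (restrict_zero (T \<xi>) (y \<xi>))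
        - normA (T0_family c) (restrict_zero (T \<eta>) (y \<eta>))\<bar> < e"
begin

abbreviation N :: "('w \<Rightarrow> real) \<Rightarrow> real" where
  "N \<equiv> normA (T0_family c)"

abbreviation tail_norm :: "'w \<Rightarrow> real" where
  "tail_norm \<xi> \<equiv> N (restrict_zero (T \<xi>) (y \<xi>))"

lemma tail_norm_le: "tail_norm \<xi> \<le> 1 + e"
proof -
  have "tail_norm \<xi> \<le> N (y \<xi>)"
    by (rule normA_abs_mono[OF T0_family_nonempty y_finite]) (simp add: restrict_zero_def)
  also have "\<dots> \<le> N (x \<xi>) + N (\<lambda>\<gamma>. y \<xi> \<gamma> - x \<xi> \<gamma>)"
    using normA_triangle_ineq[OF T0_family_nonempty x_finite[of \<xi>]
        finite_normA_diff[OF y_finite[of \<xi>] x_finite[of \<xi>]]]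
    by simp
  also have "\<dots> < 1 + e"
    using x_norm[of \<xi>] y_approx[of \<xi>] normA_minus_commute[of "T0_family c" "x \<xi>" "y \<xi>"] by simp
  finally show ?thesis by simp
qed

lemma x_diff_le: "N (\<lambda>\<gamma>. x \<xi> \<gamma> - x \<eta> \<gamma>) \<le> N (\<lambda>\<gamma>. y \<xi> \<gamma> - y \<eta> \<gamma>) + 2 * e"
  using normA_diff_le_perturb[OF T0_family_nonempty
      x_finite[of \<xi>] x_finite[of \<eta>] y_finite[of \<xi>] y_finite[of \<eta>]]
    y_approx[of \<xi>] y_approx[of \<eta>]
  by linarith

lemma y_diff_le: "N (\<lambda>\<gamma>. y \<xi> \<gamma> - y \<eta> \<gamma>) \<le> N (\<lambda>\<gamma>. x \<xi> \<gamma> - x \<eta> \<gamma>) + 2 * e"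
  using normA_diff_le_perturb[OF T0_family_nonempty
      y_finite[of \<xi>] y_finite[of \<eta>] x_finite[of \<xi>] x_finite[of \<eta>]]
    y_approx[of \<xi>] y_approx[of \<eta>] normA_minus_commute[of "T0_family c" "x \<xi>" "y \<xi>"]
    normA_minus_commute[of "T0_family c" "x \<eta>" "y \<eta>"]
  by linarith

lemma y_vanishes_on_other_tail: "\<xi> \<in> W \<Longrightarrow> \<eta> \<in> W \<Longrightarrow> \<xi> \<noteq> \<eta> \<Longrightarrow> \<alpha> \<in> T \<eta> \<Longrightarrow> y \<xi> \<alpha> = 0"
  using root_tail_disjoint[of \<eta>] tails_disjoint[of \<xi> \<eta>] by (blast intro: y_support)

lemma colour_1_y_diff_le:
  assumes "\<xi> \<in> W" "\<eta> \<in> W" "\<xi> \<noteq> \<eta>"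
    and col: "\<And>u v. u \<in> T \<xi> \<Longrightarrow> v \<in> T \<eta> \<Longrightarrow> fst (c {u, v}) = 1"
  shows "N (\<lambda>\<gamma>. y \<xi> \<gamma> - y \<eta> \<gamma>) \<le> e + max (tail_norm \<xi>) (tail_norm \<eta>)"
proof -
  have "N (\<lambda>\<gamma>. y \<xi> \<gamma> - y \<eta> \<gamma>) \<le> L2_set (\<lambda>\<gamma>. y \<xi> \<gamma> - y \<eta> \<gamma>) r + max (tail_norm \<xi>) (tail_norm \<eta>)"
    by (rule normA_diff_le_if_colour_1)
      (use assms r_finite T_finite tails_disjoint y_support in auto)
  then show ?thesis using root_close[OF assms(1,2)] by linarith
qed

lemma colour_0_tail_norms_sq_le:
  assumes "\<xi> \<in> W" "\<eta> \<in> W" "\<xi> \<noteq> \<eta>"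
    and col: "\<And>u v. u \<in> T \<xi> \<Longrightarrow> v \<in> T \<eta> \<Longrightarrow> fst (c {u, v}) = 0"
  shows "(tail_norm \<xi>)\<^sup>2 + (tail_norm \<eta>)\<^sup>2 \<le> (N (\<lambda>\<gamma>. y \<xi> \<gamma> - y \<eta> \<gamma>))\<^sup>2"
  by (rule normA_tails_sq_le_if_colour_0)
    (use assms tails_disjoint y_vanishes_on_other_tail finite_normA_diff[OF y_finite y_finite]
      in auto)

lemma close_pair:
  assumes "\<xi> \<in> W" "\<eta> \<in> W" "\<xi> \<noteq> \<eta>"
    and col: "\<And>u v. u \<in> T \<xi> \<Longrightarrow> v \<in> T \<eta> \<Longrightarrow> fst (c {u, v}) = 1"
  shows "N (\<lambda>\<gamma>. x \<xi> \<gamma> - x \<eta> \<gamma>) \<le> 1 + 4 * e"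
proof -
  have "N (\<lambda>\<gamma>. y \<xi> \<gamma> - y \<eta> \<gamma>) \<le> e + max (tail_norm \<xi>) (tail_norm \<eta>)"
    by (rule colour_1_y_diff_le[OF assms(1-3)]) (rule col)
  moreover have "max (tail_norm \<xi>) (tail_norm \<eta>) \<le> 1 + e" using tail_norm_le by simp
  ultimately show ?thesis using x_diff_le[of \<xi> \<eta>] by linarith
qed

lemma tail_norm_ge:
  assumes "\<xi> \<in> W" "\<eta> \<in> W" "\<xi> \<noteq> \<eta>"
    and col: "\<And>u v. u \<in> T \<xi> \<Longrightarrow> v \<in> T \<eta> \<Longrightarrow> fst (c {u, v}) = 1"
    and "\<zeta> \<in> W"
  shows "1 - 5 * e \<le> tail_norm \<zeta>"
proof -
  have "N (\<lambda>\<gamma>. y \<xi> \<gamma> - y \<eta> \<gamma>) \<le> e + max (tail_norm \<xi>) (tail_norm \<eta>)"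
    by (rule colour_1_y_diff_le[OF assms(1-3)]) (rule col)
  with x_separated[OF assms(3)] x_diff_le[of \<xi> \<eta>]
  have "1 - 4 * e \<le> tail_norm \<xi> \<or> 1 - 4 * e \<le> tail_norm \<eta>" by linarith
  then show ?thesis
    using tail_norm_close[OF assms(5,1)] tail_norm_close[OF assms(5,2)] by (auto simp: abs_less_iff)
qed

lemma far_pair:
  assumes "\<xi> \<in> W" "\<eta> \<in> W" "\<xi> \<noteq> \<eta>"
    and col: "\<And>u v. u \<in> T \<xi> \<Longrightarrow> v \<in> T \<eta> \<Longrightarrow> fst (c {u, v}) = 0"
    and large: "\<And>\<zeta>. \<zeta> \<in> W \<Longrightarrow> 1 - 5 * e \<le> tail_norm \<zeta>"
  shows "sqrt 2 - 10 * e \<le> N (\<lambda>\<gamma>. x \<xi> \<gamma> - x \<eta> \<gamma>)"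
proof -
  have "0 \<le> 1 - 5 * e" using e_le by simp
  then have "(1 - 5 * e)\<^sup>2 \<le> (tail_norm \<xi>)\<^sup>2" "(1 - 5 * e)\<^sup>2 \<le> (tail_norm \<eta>)\<^sup>2"
    using large[OF assms(1)] large[OF assms(2)] by (auto intro: power_mono)
  then have "2 * (1 - 5 * e)\<^sup>2 \<le> (tail_norm \<xi>)\<^sup>2 + (tail_norm \<eta>)\<^sup>2" by linarith
  also have "\<dots> \<le> (N (\<lambda>\<gamma>. y \<xi> \<gamma> - y \<eta> \<gamma>))\<^sup>2"
    by (rule colour_0_tail_norms_sq_le[OF assms(1-3)]) (rule col)
  finally have "(sqrt 2 * (1 - 5 * e))\<^sup>2 \<le> (N (\<lambda>\<gamma>. y \<xi> \<gamma> - y \<eta> \<gamma>))\<^sup>2"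
    by (simp add: power_mult_distrib)
  then have "sqrt 2 * (1 - 5 * e) \<le> N (\<lambda>\<gamma>. y \<xi> \<gamma> - y \<eta> \<gamma>)"
    by (rule power2_le_imp_le)
      (rule normA_nonneg[OF finite_normA_diff[OF y_finite y_finite] empty_in_T0_family])
  moreover have "sqrt 2 * e \<le> 3 / 2 * e"
    using e_pos by (intro mult_right_mono real_le_lsqrt) (simp_all add: power2_eq_square)
  moreover have "sqrt 2 * (1 - 5 * e) = sqrt 2 - 5 * (sqrt 2 * e)" by (simp add: algebra_simps)
  ultimately show ?thesis using y_diff_le[of \<xi> \<eta>] e_pos by linarith
qed

end

lemma Delta_approximation_exists:
  fixes c :: "'w::wellorder set \<Rightarrow> 'i::zero_neq_one \<times> 'j" and x :: "'w \<Rightarrow> 'w \<Rightarrow> real"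
  assumes om: "is_omega1 TYPE('w)" and e: "0 < e" "e \<le> 1 / 5"
    and unit: "\<forall>\<alpha>. x \<alpha> \<in> XA (T0_family c) \<and> normA (T0_family c) (x \<alpha>) = 1"
    and sep: "\<forall>\<alpha> \<beta>. \<alpha> \<noteq> \<beta> \<longrightarrow> normA (T0_family c) (\<lambda>\<gamma>. x \<alpha> \<gamma> - x \<beta> \<gamma>) \<ge> 1 - e"
  obtains y W r T where "Delta_approximation c x y e W r T"
proof -
  let ?N = "normA (T0_family c)"
  have "\<forall>\<xi>. \<exists>z \<in> c00. ?N (\<lambda>\<gamma>. x \<xi> \<gamma> - z \<gamma>) < e" using unit e unfolding XA_def by blast
  then obtain y where y_c00: "\<And>\<xi>. y \<xi> \<in> c00" and y_approx: "\<And>\<xi>. ?N (\<lambda>\<gamma>. x \<xi> \<gamma> - y \<xi> \<gamma>) < e"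
    by metis
  have supp: "finite {\<alpha>. y \<xi> \<alpha> \<noteq> 0}" for \<xi> using y_c00 by (simp add: c00_def)
  obtain W1 r T where W1: "uncountable W1" and r: "finite r"
    and T: "\<And>\<xi>. \<xi> \<in> W1 \<Longrightarrow> finite (T \<xi>)" "\<And>\<xi>. \<xi> \<in> W1 \<Longrightarrow> T \<xi> \<noteq> {}"
      "\<And>\<xi>. \<xi> \<in> W1 \<Longrightarrow> r \<inter> T \<xi> = {}" "\<And>\<xi>. \<xi> \<in> W1 \<Longrightarrow> {\<alpha>. y \<xi> \<alpha> \<noteq> 0} \<subseteq> r \<union> T \<xi>"
      "\<And>\<xi> \<eta>. \<xi> \<in> W1 \<Longrightarrow> \<eta> \<in> W1 \<Longrightarrow> \<xi> \<noteq> \<eta> \<Longrightarrow> T \<xi> \<inter> T \<eta> = {}"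
    by (rule Delta_system_tails[OF om supp]) (rule that)
  obtain W2 where W2: "W2 \<subseteq> W1" "uncountable W2"
    and root_close: "\<And>\<xi> \<eta>. \<xi> \<in> W2 \<Longrightarrow> \<eta> \<in> W2 \<Longrightarrow> L2_set (\<lambda>\<alpha>. y \<xi> \<alpha> - y \<eta> \<alpha>) r \<le> e"
    using uncountable_subset_L2_close[where h = y, OF r W1 e(1)] by blast
  obtain W3 where W3: "W3 \<subseteq> W2" "uncountable W3"
    and tail_close: "\<And>\<xi> \<eta>. \<xi> \<in> W3 \<Longrightarrow> \<eta> \<in> W3 \<Longrightarrow>
      \<bar>?N (restrict_zero (T \<xi>) (y \<xi>)) - ?N (restrict_zero (T \<eta>) (y \<eta>))\<bar> < e"
    using uncountable_subset_close[where h = "\<lambda>\<xi>. ?N (restrict_zero (T \<xi>) (y \<xi>))", OF W2(2) e(1)]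
    by blast
  have y_finite: "finite_normA (T0_family c) (y \<xi>)" for \<xi>
    using supp by (intro finite_normA_if_finite_support) (auto dest: T0_family_finite)
  have in_W1: "\<xi> \<in> W1" if "\<xi> \<in> W3" for \<xi> using W2(1) W3(1) that by blast
  have y_support: "y \<xi> \<alpha> = 0" if "\<xi> \<in> W3" "\<alpha> \<notin> r \<union> T \<xi>" for \<xi> \<alpha>
    using T(4)[OF in_W1] that by blast
  have "L2_set (\<lambda>\<alpha>. y \<xi> \<alpha> - y \<eta> \<alpha>) r \<le> e" if "\<xi> \<in> W3" "\<eta> \<in> W3" for \<xi> \<eta>
    using root_close W3(1) that by blast
  then have "Delta_approximation c x y e W3 r T"
    by unfold_locales
      (use e unit sep y_approx y_finite r T(1-3,5) W3 tail_close y_support in_W1 in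
        \<open>auto simp: XA_def\<close>)
  then show ?thesis by (rule that)
qed

lemma close_and_far_pairs:
  fixes c :: "'w::wellorder set \<Rightarrow> 'i::zero_neq_one \<times> 'j" and x :: "'w \<Rightarrow> 'w \<Rightarrow> real"
  assumes om: "is_omega1 TYPE('w)" and strong: "strong_T_coloring c I J"
    and e: "0 < e" "e \<le> 1 / 5" "11 * e \<le> \<delta>"
    and unit: "\<forall>\<alpha>. x \<alpha> \<in> XA (T0_family c) \<and> normA (T0_family c) (x \<alpha>) = 1"
    and sep: "\<forall>\<alpha> \<beta>. \<alpha> \<noteq> \<beta> \<longrightarrow> normA (T0_family c) (\<lambda>\<gamma>. x \<alpha> \<gamma> - x \<beta> \<gamma>) \<ge> 1 - e"
  shows "(\<exists>\<alpha> \<beta>. \<alpha> < \<beta> \<and> normA (T0_family c) (\<lambda>\<gamma>. x \<alpha> \<gamma> - x \<beta> \<gamma>) > sqrt 2 - \<delta>) \<and>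
    (\<exists>\<xi> \<eta>. \<xi> < \<eta> \<and> normA (T0_family c) (\<lambda>\<gamma>. x \<xi> \<gamma> - x \<eta> \<gamma>) < 1 + \<delta>)"
proof -
  obtain y W r T where "Delta_approximation c x y e W r T"
    using Delta_approximation_exists[OF om e(1,2) unit sep] by blast
  then interpret Delta_approximation c x y e W r T .
  have tails: "\<And>\<xi>. \<xi> \<in> W \<Longrightarrow> finite (T \<xi>) \<and> T \<xi> \<noteq> {}"
    using T_finite T_nonempty by blast
  obtain \<xi>1 \<eta>1 where 1: "\<xi>1 \<in> W" "\<eta>1 \<in> W" "\<xi>1 < \<eta>1"
    and col1: "\<And>u v. u \<in> T \<xi>1 \<Longrightarrow> v \<in> T \<eta>1 \<Longrightarrow> fst (c {u, v}) = 1"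
    using strong_T_coloring_monochromatic_pair[where A = T and k = 1,
        OF om strong W_uncountable tails tails_disjoint]
    by blast
  obtain \<xi>0 \<eta>0 where 0: "\<xi>0 \<in> W" "\<eta>0 \<in> W" "\<xi>0 < \<eta>0"
    and col0: "\<And>u v. u \<in> T \<xi>0 \<Longrightarrow> v \<in> T \<eta>0 \<Longrightarrow> fst (c {u, v}) = 0"
    using strong_T_coloring_monochromatic_pair[where A = T and k = 0,
        OF om strong W_uncountable tails tails_disjoint]
    by blast
  have "sqrt 2 - 10 * e \<le> N (\<lambda>\<gamma>. x \<xi>0 \<gamma> - x \<eta>0 \<gamma>)"
  proof (rule far_pair[OF 0(1,2)])
    show "\<xi>0 \<noteq> \<eta>0" using 0(3) by simp
    show "1 - 5 * e \<le> tail_norm \<zeta>" if "\<zeta> \<in> W" for \<zeta>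
      by (rule tail_norm_ge[OF 1(1,2) _ _ that]) (use 1(3) col1 in auto)
  qed (rule col0)
  moreover have "N (\<lambda>\<gamma>. x \<xi>1 \<gamma> - x \<eta>1 \<gamma>) \<le> 1 + 4 * e"
    by (rule close_pair[OF 1(1,2)]) (use 1(3) col1 in auto)
  ultimately have "sqrt 2 - \<delta> < N (\<lambda>\<gamma>. x \<xi>0 \<gamma> - x \<eta>0 \<gamma>)" "N (\<lambda>\<gamma>. x \<xi>1 \<gamma> - x \<eta>1 \<gamma>) < 1 + \<delta>"
    using e by linarith+
  then show ?thesis using 0(3) 1(3) by blast
qed

theorem proposition4p2:
  fixes c :: "'w::wellorder set \<Rightarrow> 'i::zero_neq_one \<times> 'j"
    and I :: "'i set" and J :: "'j set"
  assumes "is_omega1 TYPE('w)"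
    and "strong_T_coloring c I J"
  shows "\<forall>\<delta>>0. \<exists>\<epsilon>>0. \<forall>x :: 'w \<Rightarrow> ('w \<Rightarrow> real).
           inj x \<and>
           (\<forall>\<alpha>. x \<alpha> \<in> XA (T0_family c) \<and> normA (T0_family c) (x \<alpha>) = 1) \<and>
           (\<forall>\<alpha> \<beta>. \<alpha> \<noteq> \<beta> \<longrightarrow> normA (T0_family c) (\<lambda>\<gamma>. x \<alpha> \<gamma> - x \<beta> \<gamma>) \<ge> 1 - \<epsilon>)
           \<longrightarrow>
           (\<exists>\<alpha> \<beta>. \<alpha> < \<beta> \<and> normA (T0_family c) (\<lambda>\<gamma>. x \<alpha> \<gamma> - x \<beta> \<gamma>) > sqrt 2 - \<delta>) \<and>
           (\<exists>\<xi> \<eta>. \<xi> < \<eta> \<and> normA (T0_family c) (\<lambda>\<gamma>. x \<xi> \<gamma> - x \<eta> \<gamma>) < 1 + \<delta>)"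
  apply (intro allI impI)
  subgoal premises \<delta>_pos for \<delta>
  proof -
    let ?e = "min (\<delta> / 11) (1 / 5)"
    have e: "0 < ?e" "?e \<le> 1 / 5" "11 * ?e \<le> \<delta>" using \<delta>_pos by auto
    show ?thesis
      by (rule exI[of _ ?e], rule conjI, fact, intro allI impI, elim conjE,
          rule close_and_far_pairs[OF assms e])
  qed
  done

end
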